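(* Let $G$ be a cycle and $H=(T,L)$ a demand digraph with $T\subseteq V$. If every arc of the directed version of $G$ is contained in at most two routes, then $(G,H)$ has the uniqueness property.
   Context: A supply graph is a finite undirected graph $G=(V,E)$; its directed version (arc set $A$) replaces each edge by two opposite arcs. A demand digraph is a simple digraph $H=(T,L)$ with $T\subseteq V$, arcs called OD-pairs. For $(o,d)\in L$ an $(o,d)$-route is a directed $(o,d)$-path in the directed version of $G$. The population is a bounded real interval $I$ with Lebesgue measure $\lambda$, partitioned into measurable $I_{(o,d)}$. A strategy profile is a measurable $\sigma:I\to\{\text{routes}\}$ with $\sigma(i)$ an $(o,d)$-route for $i\in I_{(o,d)}$; flow $f_a=\lambda\{i:a\in\sigma(i)\}$. Each user $i$ has nonnegative continuous strictly increasing cost functions $c_a^i:\mathbb R_+\to\mathbb R_+$ with $i\mapsto c^i_a(x)$ measurable; route cost is $\sum_{a\in r}c_a^i(f_a)$. An equilibrium is a strategy profile where each user's route has minimal cost among the routes of his OD-pair. $(G,H)$ has the uniqueness property if for every measurable partition $(I_{(o,d)})_{(o,d)\in L}$ of $I$ and every assignment of such cost functions, the flow on each arc is the same in all equilibria. *)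

theory Defs
  imports "HOL-Analysis.Analysis"
begin

definition is_cycle :: "'v set \<Rightarrow> 'v set set \<Rightarrow> bool" where
  "is_cycle V E \<longleftrightarrow>
     (\<exists>vs. distinct vs \<and> length vs \<ge> 3 \<and> set vs = V \<and>
        E = {{vs ! k, vs ! ((k + 1) mod length vs)} | k. k < length vs})"

definition arcs_of :: "'v set set \<Rightarrow> ('v \<times> 'v) set" where
  "arcs_of E = {(u, v). {u, v} \<in> E \<and> u \<noteq> v}"

definition demand_digraph :: "'v set \<Rightarrow> 'v set \<Rightarrow> ('v \<times> 'v) set \<Rightarrow> bool" where
  "demand_digraph V T L \<longleftrightarrow> T \<subseteq> V \<and> L \<subseteq> T \<times> T \<and> (\<forall>(o', d) \<in> L. o' \<noteq> d)"

text \<open>A directed path is represented by its vertex sequence; its arcs are the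
  consecutive pairs.\<close>
definition path_arcs :: "'v list \<Rightarrow> ('v \<times> 'v) set" where
  "path_arcs p = set (zip p (tl p))"

definition is_route :: "'v set set \<Rightarrow> 'v \<Rightarrow> 'v \<Rightarrow> 'v list \<Rightarrow> bool" where
  "is_route E o' d p \<longleftrightarrow>
     p \<noteq> [] \<and> distinct p \<and> hd p = o' \<and> last p = d \<and> path_arcs p \<subseteq> arcs_of E"

definition all_routes :: "'v set set \<Rightarrow> ('v \<times> 'v) set \<Rightarrow> 'v list set" where
  "all_routes E L = {p. \<exists>(o', d) \<in> L. is_route E o' d p}"

definition population :: "real set \<Rightarrow> bool" where
  "population I \<longleftrightarrow> is_interval I \<and> bounded I"

definition od_partition :: "real set \<Rightarrow> ('v \<times> 'v) set \<Rightarrow> ('v \<times> 'v \<Rightarrow> real set) \<Rightarrow> bool" where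
  "od_partition I L P \<longleftrightarrow>
     (\<forall>od \<in> L. P od \<in> sets lebesgue) \<and>
     (\<forall>od \<in> L. \<forall>od' \<in> L. od \<noteq> od' \<longrightarrow> P od \<inter> P od' = {}) \<and>
     (\<Union>od \<in> L. P od) = I"

text \<open>Strategy profile: measurable (w.r.t. the discrete sigma-algebra on the
  finite set of routes) assignment of an (o,d)-route to every user of I_(o,d).\<close>
definition strategy_profile ::
  "'v set set \<Rightarrow> ('v \<times> 'v) set \<Rightarrow> real set \<Rightarrow> ('v \<times> 'v \<Rightarrow> real set) \<Rightarrow> (real \<Rightarrow> 'v list) \<Rightarrow> bool" where
  "strategy_profile E L I P \<sigma> \<longleftrightarrow>
     (\<forall>r. {i \<in> I. \<sigma> i = r} \<in> sets lebesgue) \<and>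
     (\<forall>(o', d) \<in> L. \<forall>i \<in> P (o', d). is_route E o' d (\<sigma> i))"

definition flow :: "real set \<Rightarrow> (real \<Rightarrow> 'v list) \<Rightarrow> 'v \<times> 'v \<Rightarrow> real" where
  "flow I \<sigma> a = measure lebesgue {i \<in> I. a \<in> path_arcs (\<sigma> i)}"

definition admissible_costs ::
  "'v set set \<Rightarrow> real set \<Rightarrow> (real \<Rightarrow> 'v \<times> 'v \<Rightarrow> real \<Rightarrow> real) \<Rightarrow> bool" where
  "admissible_costs E I c \<longleftrightarrow>
     (\<forall>i \<in> I. \<forall>a \<in> arcs_of E.
        (\<forall>x \<ge> 0. c i a x \<ge> 0) \<and> continuous_on {0..} (c i a) \<and> strict_mono_on {0..} (c i a)) \<and>
     (\<forall>a \<in> arcs_of E. \<forall>x \<ge> 0. (\<lambda>i. c i a x) \<in> borel_measurable (restrict_space lebesgue I))"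

definition route_cost ::
  "(real \<Rightarrow> 'v \<times> 'v \<Rightarrow> real \<Rightarrow> real) \<Rightarrow> real set \<Rightarrow> (real \<Rightarrow> 'v list) \<Rightarrow> real \<Rightarrow> 'v list \<Rightarrow> real" where
  "route_cost c I \<sigma> i r = (\<Sum>a \<in> path_arcs r. c i a (flow I \<sigma> a))"

definition equilibrium ::
  "'v set set \<Rightarrow> ('v \<times> 'v) set \<Rightarrow> real set \<Rightarrow> ('v \<times> 'v \<Rightarrow> real set) \<Rightarrow>
   (real \<Rightarrow> 'v \<times> 'v \<Rightarrow> real \<Rightarrow> real) \<Rightarrow> (real \<Rightarrow> 'v list) \<Rightarrow> bool" where
  "equilibrium E L I P c \<sigma> \<longleftrightarrow>
     strategy_profile E L I P \<sigma> \<and>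
     (\<forall>(o', d) \<in> L. \<forall>i \<in> P (o', d). \<forall>r. is_route E o' d r \<longrightarrow>
        route_cost c I \<sigma> i (\<sigma> i) \<le> route_cost c I \<sigma> i r)"

definition uniqueness_property ::
  "'v set set \<Rightarrow> ('v \<times> 'v) set \<Rightarrow> real set \<Rightarrow> bool" where
  "uniqueness_property E L I \<longleftrightarrow>
     (\<forall>P c \<sigma>1 \<sigma>2. od_partition I L P \<longrightarrow> admissible_costs E I c \<longrightarrow>
        equilibrium E L I P c \<sigma>1 \<longrightarrow> equilibrium E L I P c \<sigma>2 \<longrightarrow>
        (\<forall>a \<in> arcs_of E. flow I \<sigma>1 a = flow I \<sigma>2 a))"

end

theory Submission
  imports Defs
begin

(* Fix two equilibria sigma1, sigma2 for the same partition and costs.  For a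
   route r let z r be the change of the measure of the users choosing r
   (route_mass under sigma1 minus under sigma2); the flow change D on an arc
   is the sum of z r over the routes r through it.

   1. Routes in a cycle: every vertex has at most two neighbours, so a route is
      determined by its first arc; each OD-pair has at most two routes.
   2. A combinatorial cancellation lemma (locale arcs_on_two_routes): if every
      arc lies on at most two routes and every route r with z r <> 0 has a
      partner r' with z r' = - z r such that D vanishes on r whenever D has the
      sign of z r on r and of z r' on r', then D = 0.  The proof processes the
      routes by decreasing |z|.
   3. Measure theory: flows and class masses are sums of route masses.
   4. Game theory: the partner is the other route of the OD-pair of r (both
      profiles give the OD-pair the same mass); a user switching between r and
      r' weakly prefers each route in the respective equilibrium, and strict
      monotonicity of the costs (lemma strict_mono_exchange) makes D vanish. *)

lemma card_le_2_if_no_three: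
  assumes "\<And>x y w. x \<in> S \<Longrightarrow> y \<in> S \<Longrightarrow> w \<in> S \<Longrightarrow> x = y \<or> x = w \<or> y = w"
  shows "finite S" "card S \<le> 2"
proof -
  have no_three: "\<not> (B \<subseteq> S \<and> card B = 3)" for B
  proof
    assume "B \<subseteq> S \<and> card B = 3"
    then obtain x y w where "{x, y, w} \<subseteq> S" "x \<noteq> y" "x \<noteq> w" "y \<noteq> w" by (auto simp: card_3_iff)
    then show False using assms by blast
  qed
  then show "finite S" using infinite_arbitrarily_large by blast
  show "card S \<le> 2"
  proof (rule ccontr)
    assume "\<not> card S \<le> 2"
    then obtain B where "B \<subseteq> S" "card B = 3" using obtain_subset_with_card_n[of 3 S] by force
    then show False using no_three by blast
  qed
qed

lemma card_le_2_cases: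
  assumes "finite S" "card S \<le> 2" "r \<in> S"
  shows "S = {r} \<or> (\<exists>s. s \<noteq> r \<and> S = {r, s})"
proof -
  have "card (S - {r}) \<le> 1" using assms by simp
  then have "S - {r} = {} \<or> (\<exists>s. S - {r} = {s})"
    using assms(1) by (metis card_0_eq card_1_singletonE finite_Diff le_Suc_eq One_nat_def le_zero_eq)
  then show ?thesis using assms(3) by auto
qed

section \<open>Routes in a cycle\<close>

lemma arcs_of_sym: "(u, v) \<in> arcs_of E \<Longrightarrow> (v, u) \<in> arcs_of E"
  by (auto simp: arcs_of_def insert_commute)

text \<open>In a cycle each vertex has at most two neighbours: the next and the
  previous vertex in the cyclic enumeration.\<close>
lemma cycle_at_most_two_neighbours:
  assumes "is_cycle V E"
  shows "\<exists>x y. \<forall>v. (u, v) \<in> arcs_of E \<longrightarrow> v = x \<or> v = y"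
proof -
  obtain vs where vs: "distinct vs" "length vs \<ge> 3"
    and E: "E = {{vs ! k, vs ! ((k + 1) mod length vs)} | k. k < length vs}"
    using assms unfolding is_cycle_def by blast
  define n where "n = length vs"
  have "0 < n" using vs(2) unfolding n_def by linarith
  then have succ_less: "(k + 1) mod n < n" for k by simp
  have edge: "\<exists>k < n. (u = vs ! k \<and> v = vs ! ((k + 1) mod n)) \<or> (u = vs ! ((k + 1) mod n) \<and> v = vs ! k)"
    if "(u, v) \<in> arcs_of E" for v
    using that by (auto simp: arcs_of_def E n_def doubleton_eq_iff)
  show ?thesis
  proof (cases "u \<in> set vs")
    case True
    then obtain j where j: "j < n" "vs ! j = u" by (auto simp: in_set_conv_nth n_def)
    have index: "k = j" if "k < n" "vs ! k = u" for k
      using that j vs(1) nth_eq_iff_index_eq n_def by metis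
    have "v = vs ! ((j + 1) mod n) \<or> v = vs ! ((j + n - 1) mod n)" if arc: "(u, v) \<in> arcs_of E" for v
    proof -
      obtain k where k: "k < n"
        and uv: "(u = vs ! k \<and> v = vs ! ((k + 1) mod n)) \<or> (u = vs ! ((k + 1) mod n) \<and> v = vs ! k)"
        using edge[OF arc] by blast
      have "k = j \<or> (k + 1) mod n = j" using uv index k succ_less by blast
      moreover have "k = (j + n - 1) mod n" if "(k + 1) mod n = j"
      proof (cases "k + 1 < n")
        case True
        then show ?thesis using that k by auto
      next
        case False
        then have "k + 1 = n" using k by simp
        then show ?thesis using that by simp
      qed
      ultimately show ?thesis using uv index k by auto
    qed
    then show ?thesis by blast
  next
    case False
    have "(u, v) \<notin> arcs_of E" for v
      using edge succ_less False by (metis n_def nth_mem)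
    then show ?thesis by blast
  qed
qed

lemma path_arcs_Cons2: "path_arcs (x # y # p) = insert (x, y) (path_arcs (y # p))"
  by (simp add: path_arcs_def)

text \<open>In a symmetric graph of maximum degree two, a simple path is determined
  by its first arc and its last vertex: at every later vertex the only way on
  that does not go back is forced.\<close>
lemma path_determined_by_first_arc:
  assumes two: "\<And>u. \<exists>a b. \<forall>v. (u, v) \<in> A \<longrightarrow> v = a \<or> v = b"
    and sym: "\<And>u v. (u, v) \<in> A \<Longrightarrow> (v, u) \<in> A"
  shows "distinct (x # y # p) \<Longrightarrow> distinct (x # y # q) \<Longrightarrow> path_arcs (x # y # p) \<subseteq> A \<Longrightarrow>
    path_arcs (x # y # q) \<subseteq> A \<Longrightarrow> last (y # p) = last (y # q) \<Longrightarrow> p = q"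
proof (induction p arbitrary: x y q)
  case Nil
  show ?case
  proof (rule ccontr)
    assume "[] \<noteq> q"
    then have "last (y # q) \<in> set q" by simp
    then show False using Nil.prems by auto
  qed
next
  case (Cons z p)
  show ?case
  proof (cases q)
    case Nil
    then show ?thesis using Cons.prems by (metis distinct.simps(2) last.simps last_in_set list.distinct(1))
  next
    case (Cons w q')
    have arcs: "(y, z) \<in> A" "(y, w) \<in> A" "(y, x) \<in> A"
      using Cons.prems \<open>q = w # q'\<close> sym by (auto simp: path_arcs_Cons2)
    have "x \<noteq> z" "x \<noteq> w" using Cons.prems \<open>q = w # q'\<close> by auto
    then have "z = w" using two[of y] arcs by metis
    moreover have "p = q'"
      using Cons.IH[of y z q'] Cons.prems \<open>q = w # q'\<close> \<open>z = w\<close> by (auto simp: path_arcs_Cons2)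
    ultimately show ?thesis using \<open>q = w # q'\<close> by simp
  qed
qed

lemma route_first_arc:
  assumes "is_route E o' d r" "o' \<noteq> d"
  obtains y r' where "r = o' # y # r'" "(o', y) \<in> arcs_of E"
  using assms by (cases r rule: remdups_adj.cases) (auto simp: is_route_def path_arcs_Cons2)

lemma cycle_route_determined_by_first_arc:
  assumes cycle: "is_cycle V E" and "o' \<noteq> d"
    and routes: "is_route E o' d r" "is_route E o' d r'" and first: "r ! 1 = r' ! 1"
  shows "r = r'"
proof -
  obtain y t where r: "r = o' # y # t" using route_first_arc[OF routes(1) \<open>o' \<noteq> d\<close>] .
  obtain y' t' where r': "r' = o' # y' # t'" using route_first_arc[OF routes(2) \<open>o' \<noteq> d\<close>] .
  have "y = y'" using first r r' by simp
  then have "t = t'"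
    using path_determined_by_first_arc[OF cycle_at_most_two_neighbours[OF cycle] arcs_of_sym, of o' y t t']
      routes r r' by (auto simp: is_route_def)
  then show ?thesis using r r' \<open>y = y'\<close> by simp
qed

text \<open>Hence each OD-pair of a cycle has at most two routes, one for each
  arc leaving the origin.\<close>
lemma cycle_no_three_routes:
  assumes cycle: "is_cycle V E" and "o' \<noteq> d"
    and routes: "is_route E o' d p" "is_route E o' d q" "is_route E o' d s"
  shows "p = q \<or> p = s \<or> q = s"
proof -
  obtain a b where ab: "\<forall>v. (o', v) \<in> arcs_of E \<longrightarrow> v = a \<or> v = b"
    using cycle_at_most_two_neighbours[OF cycle] by blast
  have second: "r ! 1 = a \<or> r ! 1 = b" if route: "is_route E o' d r" for r
  proof -
    obtain y t where "r = o' # y # t" "(o', y) \<in> arcs_of E"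
      using route_first_arc[OF route \<open>o' \<noteq> d\<close>] .
    then show ?thesis using ab by simp
  qed
  have "p ! 1 = q ! 1 \<or> p ! 1 = s ! 1 \<or> q ! 1 = s ! 1"
    using second[OF routes(1)] second[OF routes(2)] second[OF routes(3)] by argo
  then show ?thesis
    using cycle_route_determined_by_first_arc[OF cycle \<open>o' \<noteq> d\<close>] routes by metis
qed

corollary cycle_od_routes:
  assumes "is_cycle V E" "o' \<noteq> d"
  shows "finite {r. is_route E o' d r}" "card {r. is_route E o' d r} \<le> 2"
  using card_le_2_if_no_three[of "{r. is_route E o' d r}"] cycle_no_three_routes[OF assms] by blast+

lemma finite_all_routes:
  assumes cycle: "is_cycle V E" and demand: "demand_digraph V T L"
  shows "finite (all_routes E L)"
proof -
  have "finite V" using cycle by (auto simp: is_cycle_def)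
  moreover have "L \<subseteq> V \<times> V" using demand by (auto simp: demand_digraph_def)
  ultimately have "finite L" by (meson finite_SigmaI finite_subset)
  moreover have "all_routes E L = (\<Union>(o', d) \<in> L. {r. is_route E o' d r})"
    by (auto simp: all_routes_def)
  moreover have "o' \<noteq> d" if "(o', d) \<in> L" for o' d
    using demand that by (auto simp: demand_digraph_def)
  ultimately show ?thesis using cycle_od_routes(1)[OF cycle] by auto
qed

text \<open>The hypothesis on arcs of the graph extends to all arcs, since arcs
  outside the graph lie on no route.\<close>
lemma routes_through_arc_le_2:
  assumes "\<forall>a \<in> arcs_of E. card {r \<in> all_routes E L. a \<in> path_arcs r} \<le> 2"
  shows "card {r \<in> all_routes E L. b \<in> path_arcs r} \<le> 2"
proof (cases "b \<in> arcs_of E")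
  case False
  then have "{r \<in> all_routes E L. b \<in> path_arcs r} = {}"
    by (auto simp: all_routes_def is_route_def)
  then show ?thesis by (metis card.empty zero_le)
qed (use assms in simp)

section \<open>Cancellation of mass changes along arcs lying on at most two routes\<close>

lemma mult_add_nonneg_if_abs_le:
  fixes x s :: "'a :: linordered_idom"
  assumes "\<bar>s\<bar> \<le> \<bar>x\<bar>"
  shows "0 \<le> x * (x + s)"
proof (cases "0 \<le> x")
  case True
  then have "0 \<le> x + s" using assms by (auto simp: abs_le_iff)
  then show ?thesis using True by simp
next
  case False
  then have "x + s \<le> 0" using assms by (auto simp: abs_le_iff)
  then show ?thesis using False by (simp add: mult_nonpos_nonpos)
qed

locale arcs_on_two_routes =
  fixes R :: "'r set" and ar :: "'r \<Rightarrow> 'a set" and z :: "'r \<Rightarrow> real" and D :: "'a \<Rightarrow> real"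
  assumes finite_routes: "finite R"
    and two_routes: "\<And>a. card {r \<in> R. a \<in> ar r} \<le> 2"
    and D_sum: "\<And>a. D a = (\<Sum>r \<in> {r \<in> R. a \<in> ar r}. z r)"
begin

definition routes_through :: "'a \<Rightarrow> 'r set" where
  "routes_through a = {r \<in> R. a \<in> ar r}"

lemma D_routes_through: "D a = sum z (routes_through a)"
  by (simp add: D_sum routes_through_def)

lemma routes_through_cases:
  assumes "r \<in> routes_through a"
  shows "routes_through a = {r} \<or> (\<exists>s. s \<noteq> r \<and> routes_through a = {r, s})"
  using card_le_2_cases[OF _ _ assms] finite_routes two_routes by (simp add: routes_through_def)

definition cancelled :: "'r \<Rightarrow> bool" where
  "cancelled r \<longleftrightarrow> (\<forall>a \<in> ar r. \<exists>s \<in> routes_through a. s \<noteq> r \<and> z s = - z r)"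

text \<open>If all routes with |z| > m are cancelled, then an arc of a route with
  |z| \<le> m lies on no route with |z| > m: otherwise it would lie on three routes.\<close>
lemma larger_changes_avoid:
  assumes larger_cancelled: "\<forall>s \<in> R. m < \<bar>z s\<bar> \<longrightarrow> cancelled s"
    and x: "x \<in> routes_through a" "\<bar>z x\<bar> \<le> m" and s: "s \<in> routes_through a"
  shows "\<bar>z s\<bar> \<le> m"
proof (rule ccontr)
  assume larger: "\<not> \<bar>z s\<bar> \<le> m"
  then have "cancelled s" using larger_cancelled s by (simp add: routes_through_def)
  then obtain t where t: "t \<in> routes_through a" "t \<noteq> s" "z t = - z s"
    using s by (auto simp: cancelled_def routes_through_def)
  have "x \<noteq> s" "x \<noteq> t" using x(2) t(3) larger by auto
  then have "card {x, s, t} = 3" using t(2) by simp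
  moreover have "card {x, s, t} \<le> card (routes_through a)"
    using x s t finite_routes by (intro card_mono) (auto simp: routes_through_def)
  ultimately show False using two_routes[of a] by (simp add: routes_through_def)
qed

lemma sign_of_change:
  assumes larger_cancelled: "\<forall>s \<in> R. \<bar>z x\<bar> < \<bar>z s\<bar> \<longrightarrow> cancelled s"
    and "x \<in> R" "a \<in> ar x"
  shows "0 \<le> z x * D a"
proof -
  have x: "x \<in> routes_through a" using assms by (simp add: routes_through_def)
  from routes_through_cases[OF x] show ?thesis
  proof
    assume "routes_through a = {x}"
    then show ?thesis by (simp add: D_routes_through)
  next
    assume "\<exists>s. s \<noteq> x \<and> routes_through a = {x, s}"
    then obtain s where s: "s \<noteq> x" "routes_through a = {x, s}" by blast
    then have "\<bar>z s\<bar> \<le> \<bar>z x\<bar>" using larger_changes_avoid[OF larger_cancelled x] by simp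
    moreover have "D a = z x + z s" using s by (simp add: D_routes_through)
    ultimately show ?thesis using mult_add_nonneg_if_abs_le by metis
  qed
qed

lemma cancelled_if_partners:
  assumes partner: "\<And>r. r \<in> R \<Longrightarrow> z r \<noteq> 0 \<Longrightarrow> \<exists>r' \<in> R. z r' = - z r \<and>
      ((\<forall>a \<in> ar r. 0 \<le> z r * D a) \<and> (\<forall>a \<in> ar r'. 0 \<le> z r' * D a) \<longrightarrow> (\<forall>a \<in> ar r. D a = 0))"
  shows "r \<in> R \<Longrightarrow> z r \<noteq> 0 \<Longrightarrow> cancelled r"
proof (induction r rule: measure_induct_rule[where f = "\<lambda>r. card {s \<in> R. \<bar>z r\<bar> < \<bar>z s\<bar>}"])
  case (less r)
  have larger_cancelled: "\<forall>s \<in> R. \<bar>z r\<bar> < \<bar>z s\<bar> \<longrightarrow> cancelled s"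
  proof (intro ballI impI)
    fix s assume s: "s \<in> R" "\<bar>z r\<bar> < \<bar>z s\<bar>"
    then have "{t \<in> R. \<bar>z s\<bar> < \<bar>z t\<bar>} \<subset> {t \<in> R. \<bar>z r\<bar> < \<bar>z t\<bar>}" by auto
    then have "card {t \<in> R. \<bar>z s\<bar> < \<bar>z t\<bar>} < card {t \<in> R. \<bar>z r\<bar> < \<bar>z t\<bar>}"
      using finite_routes by (intro psubset_card_mono) auto
    moreover have "z s \<noteq> 0" using s(2) by auto
    ultimately show "cancelled s" using less.IH s(1) by blast
  qed
  obtain r' where r': "r' \<in> R" "z r' = - z r"
    and vanish: "(\<forall>a \<in> ar r. 0 \<le> z r * D a) \<and> (\<forall>a \<in> ar r'. 0 \<le> z r' * D a) \<longrightarrow> (\<forall>a \<in> ar r. D a = 0)"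
    using partner[OF less.prems] by blast
  have "\<forall>a \<in> ar r. 0 \<le> z r * D a" using sign_of_change[OF larger_cancelled] less.prems(1) by blast
  moreover have "\<forall>a \<in> ar r'. 0 \<le> z r' * D a"
    using sign_of_change[of r'] larger_cancelled r' by simp
  ultimately have D_zero: "\<forall>a \<in> ar r. D a = 0" using vanish by blast
  show "cancelled r"
    unfolding cancelled_def
  proof
    fix a assume a: "a \<in> ar r"
    then have r_a: "r \<in> routes_through a" using less.prems(1) by (simp add: routes_through_def)
    moreover have "routes_through a \<noteq> {r}" using D_zero a less.prems(2) by (auto simp: D_routes_through)
    ultimately obtain s where "s \<noteq> r" "routes_through a = {r, s}" using routes_through_cases by blast
    then show "\<exists>s \<in> routes_through a. s \<noteq> r \<and> z s = - z r"
      using D_zero a by (auto simp: D_routes_through)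
  qed
qed

theorem cancellation:
  assumes partner: "\<And>r. r \<in> R \<Longrightarrow> z r \<noteq> 0 \<Longrightarrow> \<exists>r' \<in> R. z r' = - z r \<and>
      ((\<forall>a \<in> ar r. 0 \<le> z r * D a) \<and> (\<forall>a \<in> ar r'. 0 \<le> z r' * D a) \<longrightarrow> (\<forall>a \<in> ar r. D a = 0))"
  shows "D a = 0"
proof (cases "\<forall>s \<in> routes_through a. z s = 0")
  case True
  then show ?thesis by (simp add: D_routes_through)
next
  case False
  then obtain s where s: "s \<in> routes_through a" "z s \<noteq> 0" by blast
  then have "cancelled s" using cancelled_if_partners[OF partner] by (simp add: routes_through_def)
  then obtain t where t: "t \<in> routes_through a" "t \<noteq> s" "z t = - z s"
    using s(1) by (auto simp: cancelled_def routes_through_def)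
  then have "routes_through a = {s, t}" using routes_through_cases[OF s(1)] by auto
  then show ?thesis using t by (simp add: D_routes_through)
qed

end

lemma strict_mono_exchange:
  fixes g :: "'a \<Rightarrow> real \<Rightarrow> real" and x y :: "'a \<Rightarrow> real"
  assumes fin: "finite A" "finite B"
    and mono: "\<And>a. a \<in> A \<union> B \<Longrightarrow> strict_mono_on {0..} (g a)"
    and nonneg: "\<And>a. 0 \<le> x a" "\<And>a. 0 \<le> y a"
    and prefer_A: "(\<Sum>a\<in>A. g a (x a)) \<le> (\<Sum>a\<in>B. g a (x a))"
    and prefer_B: "(\<Sum>a\<in>B. g a (y a)) \<le> (\<Sum>a\<in>A. g a (y a))"
    and up_A: "\<And>a. a \<in> A \<Longrightarrow> y a \<le> x a" and down_B: "\<And>a. a \<in> B \<Longrightarrow> x a \<le> y a"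
  shows "\<forall>a \<in> A \<union> B. x a = y a"
proof -
  define \<delta> where "\<delta> a = g a (x a) - g a (y a)" for a
  have \<delta>_A: "0 \<le> \<delta> a" if a: "a \<in> A" for a
  proof -
    have "g a (y a) \<le> g a (x a)"
      by (rule strict_mono_on_leD[OF mono]) (use a nonneg up_A in auto)
    then show ?thesis by (simp add: \<delta>_def)
  qed
  have \<delta>_B: "0 \<le> - \<delta> a" if a: "a \<in> B" for a
  proof -
    have "g a (x a) \<le> g a (y a)"
      by (rule strict_mono_on_leD[OF mono]) (use a nonneg down_B in auto)
    then show ?thesis by (simp add: \<delta>_def)
  qed
  have "sum \<delta> A \<le> sum \<delta> B"
    using prefer_A prefer_B by (simp add: \<delta>_def sum_subtractf)
  moreover have "0 \<le> sum \<delta> A" "0 \<le> (\<Sum>a\<in>B. - \<delta> a)"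
    using \<delta>_A \<delta>_B by (auto intro: sum_nonneg)
  moreover have "(\<Sum>a\<in>B. - \<delta> a) = - sum \<delta> B" by (rule sum_negf)
  ultimately have "sum \<delta> A = 0" "(\<Sum>a\<in>B. - \<delta> a) = 0" by linarith+
  then have "\<forall>a\<in>A. \<delta> a = 0" "\<forall>a\<in>B. - \<delta> a = 0"
    by (simp_all add: sum_nonneg_eq_0_iff[OF fin(1) \<delta>_A] sum_nonneg_eq_0_iff[OF fin(2) \<delta>_B])
  show ?thesis
  proof
    fix a assume a: "a \<in> A \<union> B"
    have "g a (x a) = g a (y a)" using \<open>\<forall>a\<in>A. \<delta> a = 0\<close> \<open>\<forall>a\<in>B. - \<delta> a = 0\<close> a
      by (auto simp: \<delta>_def)
    from strict_mono_on_eqD[OF mono[OF a] this] nonneg show "x a = y a" by simp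
  qed
qed

section \<open>Route masses and flows of a strategy profile\<close>

definition route_mass :: "real set \<Rightarrow> (real \<Rightarrow> 'v list) \<Rightarrow> 'v list \<Rightarrow> real" where
  "route_mass I \<sigma> r = measure lebesgue {i \<in> I. \<sigma> i = r}"

lemma route_users_lmeasurable:
  assumes "population I" "strategy_profile E L I P \<sigma>"
  shows "{i \<in> I. \<sigma> i = r} \<in> lmeasurable"
  using assms by (intro bounded_set_imp_lmeasurable)
    (auto simp: population_def strategy_profile_def intro: bounded_subset)

lemma measure_users_choosing:
  assumes "finite R" and "\<And>r. {i \<in> I. \<sigma> i = r} \<in> lmeasurable"
  shows "measure lebesgue {i \<in> I. \<sigma> i \<in> R} = (\<Sum>r\<in>R. measure lebesgue {i \<in> I. \<sigma> i = r})"
proof -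
  have "{i \<in> I. \<sigma> i \<in> R} = (\<Union>r\<in>R. {i \<in> I. \<sigma> i = r})" by auto
  moreover have "measure lebesgue (\<Union>r\<in>R. {i \<in> I. \<sigma> i = r}) = (\<Sum>r\<in>R. measure lebesgue {i \<in> I. \<sigma> i = r})"
    using assms(1) fmeasurableD[OF assms(2)] fmeasurableD2[OF assms(2)]
    by (intro measure_finite_Union) (auto simp: disjoint_family_on_def)
  ultimately show ?thesis by simp
qed

text \<open>The class of an OD-pair consists exactly of the users whose chosen route
  is a route of that OD-pair, since a route determines its origin and destination.\<close>
lemma od_class_eq:
  assumes part: "od_partition I L P" and prof: "strategy_profile E L I P \<sigma>" and od: "(o', d) \<in> L"
  shows "P (o', d) = {i \<in> I. is_route E o' d (\<sigma> i)}"
proof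
  show "P (o', d) \<subseteq> {i \<in> I. is_route E o' d (\<sigma> i)}"
    using part prof od by (auto simp: od_partition_def strategy_profile_def)
  show "{i \<in> I. is_route E o' d (\<sigma> i)} \<subseteq> P (o', d)"
  proof
    fix i assume i: "i \<in> {i \<in> I. is_route E o' d (\<sigma> i)}"
    then obtain o2 d2 where od2: "(o2, d2) \<in> L" "i \<in> P (o2, d2)"
      using part by (auto simp: od_partition_def)
    then have "is_route E o2 d2 (\<sigma> i)" using prof by (auto simp: strategy_profile_def)
    then have "(o2, d2) = (o', d)" using i by (simp add: is_route_def)
    then show "i \<in> P (o', d)" using od2 by simp
  qed
qed

lemma profile_routes:
  assumes "od_partition I L P" "strategy_profile E L I P \<sigma>" "i \<in> I"
  shows "\<sigma> i \<in> all_routes E L"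
  using assms by (fastforce simp: od_partition_def strategy_profile_def all_routes_def)

lemma flow_eq_sum_route_mass:
  assumes pop: "population I" and part: "od_partition I L P" and prof: "strategy_profile E L I P \<sigma>"
    and fin: "finite (all_routes E L)"
  shows "flow I \<sigma> a = (\<Sum>r \<in> {r \<in> all_routes E L. a \<in> path_arcs r}. route_mass I \<sigma> r)"
proof -
  have "flow I \<sigma> a = measure lebesgue {i \<in> I. \<sigma> i \<in> {r \<in> all_routes E L. a \<in> path_arcs r}}"
    unfolding flow_def using profile_routes[OF part prof] by (intro arg_cong[where f = "measure lebesgue"]) auto
  also have "\<dots> = (\<Sum>r \<in> {r \<in> all_routes E L. a \<in> path_arcs r}. route_mass I \<sigma> r)"
    unfolding route_mass_def
    by (rule measure_users_choosing) (use fin route_users_lmeasurable[OF pop prof] in auto)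
  finally show ?thesis .
qed

lemma od_class_measure_eq_sum_route_mass:
  assumes pop: "population I" and part: "od_partition I L P" and prof: "strategy_profile E L I P \<sigma>"
    and od: "(o', d) \<in> L" and fin: "finite {r. is_route E o' d r}"
  shows "measure lebesgue (P (o', d)) = (\<Sum>r \<in> {r. is_route E o' d r}. route_mass I \<sigma> r)"
  using measure_users_choosing[OF fin route_users_lmeasurable[OF pop prof]] od_class_eq[OF part prof od]
  by (simp add: route_mass_def)

section \<open>Comparing two equilibria\<close>

lemma equilibria_switching_user:
  assumes adm: "admissible_costs E I c"
    and eq: "equilibrium E L I P c \<sigma>" and eq': "equilibrium E L I P c \<sigma>'"
    and od: "(o', d) \<in> L" and i: "i \<in> P (o', d)" "i \<in> I"
    and up: "\<forall>a \<in> path_arcs (\<sigma> i). flow I \<sigma>' a \<le> flow I \<sigma> a"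
    and down: "\<forall>a \<in> path_arcs (\<sigma>' i). flow I \<sigma> a \<le> flow I \<sigma>' a"
  shows "\<forall>a \<in> path_arcs (\<sigma> i). flow I \<sigma> a = flow I \<sigma>' a"
proof -
  have routes: "is_route E o' d (\<sigma> i)" "is_route E o' d (\<sigma>' i)"
    using eq eq' od i by (auto simp: equilibrium_def strategy_profile_def)
  have "route_cost c I \<sigma> i (\<sigma> i) \<le> route_cost c I \<sigma> i (\<sigma>' i)"
    using eq od i(1) routes(2) by (auto simp: equilibrium_def)
  moreover have "route_cost c I \<sigma>' i (\<sigma>' i) \<le> route_cost c I \<sigma>' i (\<sigma> i)"
    using eq' od i(1) routes(1) by (auto simp: equilibrium_def)
  moreover have "strict_mono_on {0..} (c i a)" if "a \<in> path_arcs (\<sigma> i) \<union> path_arcs (\<sigma>' i)" for a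
    using adm i(2) routes that by (auto simp: admissible_costs_def is_route_def)
  moreover have "finite (path_arcs (\<sigma> i))" "finite (path_arcs (\<sigma>' i))" by (simp_all add: path_arcs_def)
  moreover have "0 \<le> flow I \<sigma> a" "0 \<le> flow I \<sigma>' a" for a by (simp_all add: flow_def)
  ultimately have "\<forall>a \<in> path_arcs (\<sigma> i) \<union> path_arcs (\<sigma>' i). flow I \<sigma> a = flow I \<sigma>' a"
    using up down by (intro strict_mono_exchange) (auto simp: route_cost_def)
  then show ?thesis by blast
qed

lemma switching_user_exists:
  assumes "route_mass I \<sigma>' r < route_mass I \<sigma> r"
    and "{i \<in> I. \<sigma> i = r} \<in> lmeasurable" "{i \<in> I. \<sigma>' i = r} \<in> lmeasurable"
  shows "\<exists>i \<in> I. \<sigma> i = r \<and> \<sigma>' i \<noteq> r"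
proof (rule ccontr)
  assume "\<not> ?thesis"
  then have "{i \<in> I. \<sigma> i = r} \<subseteq> {i \<in> I. \<sigma>' i = r}" by auto
  then have "route_mass I \<sigma> r \<le> route_mass I \<sigma>' r"
    unfolding route_mass_def using assms(2,3) by (intro measure_mono_fmeasurable) auto
  then show False using assms(1) by simp
qed

lemma flows_agree_on_route_gaining_users:
  assumes pop: "population I" and part: "od_partition I L P" and adm: "admissible_costs E I c"
    and eq: "equilibrium E L I P c \<sigma>" and eq': "equilibrium E L I P c \<sigma>'"
    and od: "(o', d) \<in> L" and routes: "{p. is_route E o' d p} = {r, r'}"
    and more: "route_mass I \<sigma>' r < route_mass I \<sigma> r"
    and up: "\<forall>a \<in> path_arcs r. flow I \<sigma>' a \<le> flow I \<sigma> a"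
    and down: "\<forall>a \<in> path_arcs r'. flow I \<sigma> a \<le> flow I \<sigma>' a"
  shows "\<forall>a \<in> path_arcs r. flow I \<sigma> a = flow I \<sigma>' a"
proof -
  have prof: "strategy_profile E L I P \<sigma>" and prof': "strategy_profile E L I P \<sigma>'"
    using eq eq' by (simp_all add: equilibrium_def)
  obtain i where i: "i \<in> I" "\<sigma> i = r" "\<sigma>' i \<noteq> r"
    using switching_user_exists[OF more route_users_lmeasurable[OF pop prof]
        route_users_lmeasurable[OF pop prof']] by blast
  have "is_route E o' d r" using routes by blast
  then have i_class: "i \<in> P (o', d)" using od_class_eq[OF part prof od] i by simp
  then have "is_route E o' d (\<sigma>' i)" using prof' od by (auto simp: strategy_profile_def)
  then have "\<sigma>' i = r'" using routes i(3) by blast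
  then show ?thesis using equilibria_switching_user[OF adm eq eq' od i_class i(1)] i(2) up down by simp
qed

text \<open>A route whose mass changes between two profiles has a partner: the other
  route of its OD-pair, whose mass changes by the opposite amount, because the
  OD-pair has the same total mass in both profiles.\<close>
lemma mass_change_partner:
  assumes cycle: "is_cycle V E" and demand: "demand_digraph V T L" and pop: "population I"
    and part: "od_partition I L P"
    and prof1: "strategy_profile E L I P \<sigma>1" and prof2: "strategy_profile E L I P \<sigma>2"
    and z_def: "\<And>r. z r = route_mass I \<sigma>1 r - route_mass I \<sigma>2 r"
    and od: "(o', d) \<in> L" and r: "is_route E o' d r" and nonzero: "z r \<noteq> 0"
  obtains r' where "{p. is_route E o' d p} = {r, r'}" "z r' = - z r"
proof -
  have "o' \<noteq> d" using demand od by (auto simp: demand_digraph_def)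
  note od_routes = cycle_od_routes[OF cycle this]
  have balance: "sum z {p. is_route E o' d p} = 0"
    using od_class_measure_eq_sum_route_mass[OF pop part prof1 od od_routes(1)]
      od_class_measure_eq_sum_route_mass[OF pop part prof2 od od_routes(1)]
    by (simp add: z_def sum_subtractf)
  have "{p. is_route E o' d p} \<noteq> {r}"
  proof
    assume "{p. is_route E o' d p} = {r}"
    then have "z r = 0" using balance by simp
    then show False using nonzero by simp
  qed
  then obtain r' where r': "r' \<noteq> r" and routes: "{p. is_route E o' d p} = {r, r'}"
    using card_le_2_cases[OF od_routes] r by blast
  moreover have "z r' = - z r" using balance r' unfolding routes by simp
  ultimately show thesis using that by blast
qed

lemma equilibria_partner_route:
  assumes cycle: "is_cycle V E" and demand: "demand_digraph V T L" and pop: "population I"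
    and part: "od_partition I L P" and adm: "admissible_costs E I c"
    and eq1: "equilibrium E L I P c \<sigma>1" and eq2: "equilibrium E L I P c \<sigma>2"
    and z_def: "\<And>r. z r = route_mass I \<sigma>1 r - route_mass I \<sigma>2 r"
    and D_def: "\<And>a. D a = flow I \<sigma>1 a - flow I \<sigma>2 a"
    and r: "r \<in> all_routes E L" and nonzero: "z r \<noteq> 0"
  shows "\<exists>r' \<in> all_routes E L. z r' = - z r \<and>
    ((\<forall>a \<in> path_arcs r. 0 \<le> z r * D a) \<and> (\<forall>a \<in> path_arcs r'. 0 \<le> z r' * D a) \<longrightarrow>
     (\<forall>a \<in> path_arcs r. D a = 0))"
proof -
  obtain o' d where od: "(o', d) \<in> L" and r_route: "is_route E o' d r"
    using r by (auto simp: all_routes_def)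
  have prof1: "strategy_profile E L I P \<sigma>1" and prof2: "strategy_profile E L I P \<sigma>2"
    using eq1 eq2 by (simp_all add: equilibrium_def)
  obtain r' where routes: "{p. is_route E o' d p} = {r, r'}" and z_r': "z r' = - z r"
    using mass_change_partner[OF cycle demand pop part prof1 prof2 z_def od r_route nonzero] .
  have "is_route E o' d r'" using routes by blast
  then have "r' \<in> all_routes E L" using od by (auto simp: all_routes_def)
  moreover have "\<forall>a \<in> path_arcs r. D a = 0"
    if signs: "\<forall>a \<in> path_arcs r. 0 \<le> z r * D a" "\<forall>a \<in> path_arcs r'. 0 \<le> z r' * D a"
  proof (cases "0 < z r")
    case True
    have "z r' < 0" using True z_r' by simp
    have up: "\<forall>a \<in> path_arcs r. flow I \<sigma>2 a \<le> flow I \<sigma>1 a"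
      using signs(1) True by (auto simp: D_def zero_le_mult_iff)
    have down: "\<forall>a \<in> path_arcs r'. flow I \<sigma>1 a \<le> flow I \<sigma>2 a"
      using signs(2) \<open>z r' < 0\<close> by (auto simp: D_def zero_le_mult_iff)
    have "route_mass I \<sigma>2 r < route_mass I \<sigma>1 r" using True by (simp add: z_def)
    from flows_agree_on_route_gaining_users[OF pop part adm eq1 eq2 od routes this up down]
    show ?thesis by (simp add: D_def)
  next
    case False
    then have "z r < 0" "0 < z r'" using nonzero z_r' by simp_all
    have up: "\<forall>a \<in> path_arcs r. flow I \<sigma>1 a \<le> flow I \<sigma>2 a"
      using signs(1) \<open>z r < 0\<close> by (auto simp: D_def zero_le_mult_iff)
    have down: "\<forall>a \<in> path_arcs r'. flow I \<sigma>2 a \<le> flow I \<sigma>1 a"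
      using signs(2) \<open>0 < z r'\<close> by (auto simp: D_def zero_le_mult_iff)
    have "route_mass I \<sigma>1 r < route_mass I \<sigma>2 r" using \<open>z r < 0\<close> by (simp add: z_def)
    from flows_agree_on_route_gaining_users[OF pop part adm eq2 eq1 od routes this up down]
    show ?thesis by (simp add: D_def)
  qed
  ultimately show ?thesis using z_r' by blast
qed

theorem proposition1:
  fixes V T :: "'v set" and E :: "'v set set" and L :: "('v \<times> 'v) set" and I :: "real set"
  assumes "is_cycle V E"
    and "demand_digraph V T L"
    and "population I"
    and "\<forall>a \<in> arcs_of E. card {r \<in> all_routes E L. a \<in> path_arcs r} \<le> 2"
  shows "uniqueness_property E L I"
  unfolding uniqueness_property_def
proof (intro allI impI ballI)
  fix P c \<sigma>1 \<sigma>2 and a :: "'v \<times> 'v"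
  assume part: "od_partition I L P" and adm: "admissible_costs E I c"
    and eq1: "equilibrium E L I P c \<sigma>1" and eq2: "equilibrium E L I P c \<sigma>2"
  define z where "z r = route_mass I \<sigma>1 r - route_mass I \<sigma>2 r" for r
  define D where "D b = flow I \<sigma>1 b - flow I \<sigma>2 b" for b
  have fin: "finite (all_routes E L)" using finite_all_routes assms(1,2) .
  have D_sum: "D b = (\<Sum>r \<in> {r \<in> all_routes E L. b \<in> path_arcs r}. z r)" for b
    using flow_eq_sum_route_mass[OF assms(3) part _ fin] eq1 eq2
    by (simp add: D_def z_def sum_subtractf equilibrium_def)
  interpret arcs_on_two_routes "all_routes E L" path_arcs z D
    using fin routes_through_arc_le_2[OF assms(4)] D_sum by unfold_locales
  have "D a = 0"
    by (rule cancellation[OF equilibria_partner_route[OF assms(1-3) part adm eq1 eq2 z_def D_def]])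
  then show "flow I \<sigma>1 a = flow I \<sigma>2 a" by (simp add: D_def)
qed

end
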